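(* Let $G=(V\cup C,E)$ be a protograph and let $\epsilon\in[0,1]$. Suppose the degree-2 subgraph $G_2$ contains a cycle. Then for every edge $e_i$ of that cycle and every $t\ge 0$, the BEC density evolution quantities satisfy $x_t(i)\ge \epsilon^{t+1}$. In particular, for $\epsilon>0$, $x_t(i)$ does not decay double-exponentially in $t$ (i.e., there are no positive constants $\alpha,\beta,K$ with $x_t(i)\le K\exp(-\beta 2^{\alpha t})$ for all large $t$).
   Context: A protograph is a finite bipartite multigraph $G=(V\cup C,E)$ with variable (bit) nodes $V$, check nodes $C$, and ordered edges $E=\{e_1,\dots,e_{|E|}\}$; parallel edges between a variable node and a check node are allowed. For an edge $e$, $v(e)$ and $c(e)$ denote its variable-node and check-node endpoints. The degree of a node is the number of incident edges counted with multiplicity. For an edge $e$, $E_c(e)=\{i: c(e_i)=c(e),\ e_i\neq e\}$ and $E_v(e)=\{i: v(e_i)=v(e),\ e_i\ne e\}$. The degree-2 subgraph $G_2$ of $G$ consists of all degree-2 variable nodes, all edges incident to them, and the check nodes incident to those edges; a cycle in $G_2$ may have length $2$ (two parallel edges between the same variable and check node). Protograph density evolution over BEC$(\epsilon)$: $x_0(i)=\epsilon$ for all $i$, and for $t\ge 0$, $y_{t+1}(j)=1-\prod_{i\in E_c(e_j)}(1-x_t(i))$, $x_{t+1}(i)=\epsilon\prod_{j\in E_v(e_i)}y_{t+1}(j)$ (empty products equal $1$). *)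

theory Defs
  imports Complex_Main
begin

text \<open>A protograph with edges e_0, ..., e_{m-1} (indices i < m); edge i joins
  variable node ve i and check node ce i. Parallel edges are allowed.\<close>

definition protograph :: "'v set \<Rightarrow> 'c set \<Rightarrow> nat \<Rightarrow> (nat \<Rightarrow> 'v) \<Rightarrow> (nat \<Rightarrow> 'c) \<Rightarrow> bool" where
  "protograph V C m ve ce \<longleftrightarrow> finite V \<and> finite C \<and> (\<forall>i<m. ve i \<in> V \<and> ce i \<in> C)"

definition Ec :: "nat \<Rightarrow> (nat \<Rightarrow> 'c) \<Rightarrow> nat \<Rightarrow> nat set" where
  "Ec m ce i = {k. k < m \<and> ce k = ce i \<and> k \<noteq> i}"

definition Ev :: "nat \<Rightarrow> (nat \<Rightarrow> 'v) \<Rightarrow> nat \<Rightarrow> nat set" where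
  "Ev m ve i = {k. k < m \<and> ve k = ve i \<and> k \<noteq> i}"

definition vdeg :: "nat \<Rightarrow> (nat \<Rightarrow> 'v) \<Rightarrow> 'v \<Rightarrow> nat" where
  "vdeg m ve v = card {i. i < m \<and> ve i = v}"

primrec bec_x :: "nat \<Rightarrow> (nat \<Rightarrow> 'v) \<Rightarrow> (nat \<Rightarrow> 'c) \<Rightarrow> real \<Rightarrow> nat \<Rightarrow> nat \<Rightarrow> real" where
  "bec_x m ve ce eps 0 = (\<lambda>i. eps)"
| "bec_x m ve ce eps (Suc t) =
     (\<lambda>i. eps * (\<Prod>j\<in>Ev m ve i. 1 - (\<Prod>k\<in>Ec m ce j. 1 - bec_x m ve ce eps t k)))"

text \<open>y_{t+1}(j), for reference.\<close>
definition bec_y :: "nat \<Rightarrow> (nat \<Rightarrow> 'v) \<Rightarrow> (nat \<Rightarrow> 'c) \<Rightarrow> real \<Rightarrow> nat \<Rightarrow> nat \<Rightarrow> real" where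
  "bec_y m ve ce eps t j = 1 - (\<Prod>k\<in>Ec m ce j. 1 - bec_x m ve ce eps t k)"

text \<open>A cycle in the degree-2 subgraph G_2, given as the list of its edges
  js = [a_0, b_0, a_1, b_1, ..., a_{L-1}, b_{L-1}] (L >= 1, length 2L):
  a_p and b_p share the variable node v_p (of degree 2), b_p and a_{p+1 mod L}
  share the check node c_p; edges are distinct, the v_p are distinct and the
  c_p are distinct. L = 1 gives a length-2 cycle (two parallel edges).\<close>

definition G2_cycle :: "nat \<Rightarrow> (nat \<Rightarrow> 'v) \<Rightarrow> (nat \<Rightarrow> 'c) \<Rightarrow> nat list \<Rightarrow> bool" where
  "G2_cycle m ve ce js \<longleftrightarrow>
     (let n = length js in
       even n \<and> n \<ge> 2 \<and> distinct js \<and> set js \<subseteq> {..<m} \<and>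
       (\<forall>j\<in>set js. vdeg m ve (ve j) = 2) \<and>
       (\<forall>p < n div 2. ve (js ! (2*p)) = ve (js ! (2*p+1)) \<and>
                       ce (js ! (2*p+1)) = ce (js ! ((2*p+2) mod n))) \<and>
       inj_on (\<lambda>p. ve (js ! (2*p))) {..<n div 2} \<and>
       inj_on (\<lambda>p. ce (js ! (2*p+1))) {..<n div 2})"

end

theory Submission
  imports Defs "HOL-Real_Asymp.Real_Asymp"
begin

text \<open>Along a cycle of degree-2 variable nodes, each edge e has exactly one other edge at its
  variable node, and that edge has a neighbour e' at its check node. Hence x_{t+1}(e) equals
  eps times a check-node erasure probability which is at least x_t(e'), so every edge of the
  cycle loses at most one factor eps per iteration: x_t \<ge> eps^(t+1). Such a geometric lower
  bound is incompatible with any double-exponential decay.\<close>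

lemma bec_x_bounds:
  assumes "0 \<le> eps" "eps \<le> 1"
  shows "0 \<le> bec_x m ve ce eps t k \<and> bec_x m ve ce eps t k \<le> 1"
proof (induction t arbitrary: k)
  case 0
  then show ?case using assms by simp
next
  case (Suc t)
  have "0 \<le> (\<Prod>l\<in>Ec m ce j. 1 - bec_x m ve ce eps t l) \<and>
        (\<Prod>l\<in>Ec m ce j. 1 - bec_x m ve ce eps t l) \<le> 1" for j
    using Suc by (auto intro!: prod_nonneg prod_le_1)
  then have "0 \<le> (\<Prod>j\<in>Ev m ve k. 1 - (\<Prod>l\<in>Ec m ce j. 1 - bec_x m ve ce eps t l)) \<and>
             (\<Prod>j\<in>Ev m ve k. 1 - (\<Prod>l\<in>Ec m ce j. 1 - bec_x m ve ce eps t l)) \<le> 1"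
    by (auto intro!: prod_nonneg prod_le_1)
  then show ?case using assms by (simp add: mult_le_one)
qed

lemma one_minus_prod_one_minus_ge:
  fixes a :: "'a \<Rightarrow> 'b::linordered_idom"
  assumes "finite S" "k \<in> S" "\<And>l. l \<in> S \<Longrightarrow> 0 \<le> a l \<and> a l \<le> 1"
  shows "a k \<le> 1 - (\<Prod>l\<in>S. 1 - a l)"
proof -
  have "(\<Prod>l\<in>S. 1 - a l) = (1 - a k) * (\<Prod>l\<in>S - {k}. 1 - a l)"
    using assms by (simp add: prod.remove)
  also have "\<dots> \<le> 1 - a k"
    using assms by (intro mult_right_le_one_le prod_nonneg prod_le_1) auto
  finally show ?thesis by simp
qed

lemma Ev_eq_singleton_if_vdeg_2:
  assumes "vdeg m ve (ve i) = 2" "i < m" "j < m" "j \<noteq> i" "ve j = ve i"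
  shows "Ev m ve i = {j}"
proof -
  have "{i, j} = {l. l < m \<and> ve l = ve i}"
    by (rule card_seteq) (use assms in \<open>auto simp: vdeg_def\<close>)
  then show ?thesis using assms(4) by (auto simp: Ev_def)
qed

lemma bec_x_Suc_ge_through_degree_2_node:
  assumes "0 \<le> eps" "eps \<le> 1"
    and "vdeg m ve (ve i) = 2" "i < m" "j < m" "j \<noteq> i" "ve j = ve i"
    and "k < m" "k \<noteq> j" "ce k = ce j"
  shows "eps * bec_x m ve ce eps t k \<le> bec_x m ve ce eps (Suc t) i"
proof -
  have "0 \<le> bec_x m ve ce eps t l \<and> bec_x m ve ce eps t l \<le> 1" for l
    using bec_x_bounds[OF assms(1,2)] .
  then have "bec_x m ve ce eps t k \<le> 1 - (\<Prod>l\<in>Ec m ce j. 1 - bec_x m ve ce eps t l)"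
    by (intro one_minus_prod_one_minus_ge) (use assms in \<open>auto simp: Ec_def\<close>)
  then show ?thesis
    using Ev_eq_singleton_if_vdeg_2[OF assms(3-7)] assms(1) by (simp add: mult_left_mono)
qed

lemma G2_cycle_variable_partner:
  assumes "G2_cycle m ve ce js" "q < length js"
  obtains p where "p < length js" "p \<noteq> q" "ve (js ! p) = ve (js ! q)"
proof -
  let ?n = "length js"
  have pairs: "ve (js ! (2*r)) = ve (js ! (2*r+1))" if "r < ?n div 2" for r
    using assms(1) that by (auto simp: G2_cycle_def Let_def)
  obtain h where h: "?n = 2*h" using assms(1) by (auto simp: G2_cycle_def Let_def)
  show thesis
  proof (cases "even q")
    case True
    then obtain r where r: "q = 2*r" by blast
    with h assms(2) have "2*r+1 < ?n" "r < ?n div 2" by presburger+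
    with pairs[of r] r show thesis by (intro that[of "2*r+1"]) auto
  next
    case False
    then obtain r where r: "q = 2*r+1" by (metis oddE)
    with h assms(2) have "2*r < ?n" "r < ?n div 2" by presburger+
    with pairs[of r] r show thesis by (intro that[of "2*r"]) auto
  qed
qed

lemma G2_cycle_check_partner:
  assumes "G2_cycle m ve ce js" "p < length js"
  obtains k where "k < length js" "k \<noteq> p" "ce (js ! k) = ce (js ! p)"
proof -
  let ?n = "length js"
  have links: "ce (js ! (2*r+1)) = ce (js ! ((2*r+2) mod ?n))" if "r < ?n div 2" for r
    using assms(1) that by (auto simp: G2_cycle_def Let_def)
  obtain h where h: "?n = 2*h" "h \<ge> 1" using assms(1) by (auto simp: G2_cycle_def Let_def)
  show thesis
  proof (cases "even p")
    case True
    then obtain r where r: "p = 2*r" by blast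
    show thesis
    proof (cases r)
      case 0
      have "2*(h-1)+2 = ?n" using h by simp
      then have "(2*(h-1)+2) mod ?n = 0" by simp
      with links[of "h-1"] h have "ce (js ! (2*(h-1)+1)) = ce (js ! 0)" by simp
      moreover have "2*(h-1)+1 < ?n" "2*(h-1)+1 \<noteq> p" using h r 0 by linarith+
      ultimately show thesis using r 0 by (intro that[of "2*(h-1)+1"]) auto
    next
      case (Suc s)
      have "(2*s+2) mod ?n = p" "s < ?n div 2" using assms(2) r Suc h by simp_all
      with links[of s] have "ce (js ! (2*s+1)) = ce (js ! p)" by simp
      moreover have "2*s+1 < ?n" "2*s+1 \<noteq> p" using assms(2) r Suc by linarith+
      ultimately show thesis by (intro that[of "2*s+1"])
    qed
  next
    case False
    then obtain r where r: "p = 2*r+1" by (metis oddE)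
    have "r < ?n div 2" using assms(2) r h by linarith
    moreover have "(2*r+2) mod ?n \<noteq> p"
    proof -
      have "even ((2*r+2) mod ?n)" using h by (intro dvd_mod) auto
      then show ?thesis using r by auto
    qed
    moreover have "(2*r+2) mod ?n < ?n" using h by simp
    ultimately show thesis using links[of r] r by (intro that[of "(2*r+2) mod ?n"]) auto
  qed
qed

lemma bec_x_on_G2_cycle_ge:
  assumes "0 \<le> eps" "eps \<le> 1" "G2_cycle m ve ce js" "i \<in> set js"
  shows "eps ^ (t + 1) \<le> bec_x m ve ce eps t i"
  using assms(4)
proof (induction t arbitrary: i)
  case 0
  then show ?case by simp
next
  case (Suc t)
  have edges: "set js \<subseteq> {..<m}" and degree_2: "\<forall>j\<in>set js. vdeg m ve (ve j) = 2"
    and "distinct js"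
    using assms(3) by (auto simp: G2_cycle_def Let_def)
  obtain q where q: "q < length js" "i = js ! q" using Suc.prems by (metis in_set_conv_nth)
  obtain p where p: "p < length js" "p \<noteq> q" "ve (js ! p) = ve (js ! q)"
    using G2_cycle_variable_partner[OF assms(3) q(1)] .
  obtain k where k: "k < length js" "k \<noteq> p" "ce (js ! k) = ce (js ! p)"
    using G2_cycle_check_partner[OF assms(3) p(1)] .
  have "eps * eps ^ (t + 1) \<le> eps * bec_x m ve ce eps t (js ! k)"
    using Suc.IH k(1) assms(1) by (simp add: mult_left_mono)
  also have "\<dots> \<le> bec_x m ve ce eps (Suc t) i"
    using \<open>distinct js\<close> q p k edges degree_2 nth_mem
    by (intro bec_x_Suc_ge_through_degree_2_node[OF assms(1,2)]) (auto simp: nth_eq_iff_index_eq)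
  finally show ?case by simp
qed

lemma geometric_lower_bound_not_double_exponential:
  fixes f :: "nat \<Rightarrow> real"
  assumes "0 < eps" "\<And>t. eps ^ (t + 1) \<le> f t" "\<alpha> > 0" "\<beta> > 0" "K > 0"
  shows "\<not> (\<forall>\<^sub>F t in sequentially. f t \<le> K * exp (- \<beta> * 2 powr (\<alpha> * real t)))"
proof
  have powr_eq: "eps powr (real t + 1) = eps ^ (t + 1)" for t
    using powr_realpow[OF assms(1), of "t + 1"] by (simp add: add.commute)
  assume "\<forall>\<^sub>F t in sequentially. f t \<le> K * exp (- \<beta> * 2 powr (\<alpha> * real t))"
  moreover have "\<forall>\<^sub>F t in sequentially. K * exp (- \<beta> * 2 powr (\<alpha> * real t)) < eps powr (real t + 1)"
    using assms(1,3-5) by real_asymp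
  ultimately have "\<forall>\<^sub>F t in sequentially. f t < eps ^ (t + 1)"
    by eventually_elim (simp add: powr_eq)
  then show False
    using assms(2) by (simp add: not_le[symmetric])
qed

theorem mainTheorem2:
  fixes V :: "'v set" and C :: "'c set" and m :: nat
    and ve :: "nat \<Rightarrow> 'v" and ce :: "nat \<Rightarrow> 'c"
    and eps :: real and js :: "nat list"
  assumes "protograph V C m ve ce"
    and "0 \<le> eps" and "eps \<le> 1"
    and "G2_cycle m ve ce js"
  shows "\<forall>i\<in>set js. (\<forall>t. bec_x m ve ce eps t i \<ge> eps ^ (t + 1)) \<and>
           (eps > 0 \<longrightarrow>
              \<not> (\<exists>\<alpha> \<beta> K. \<alpha> > 0 \<and> \<beta> > 0 \<and> K > 0 \<and>
                   (\<forall>\<^sub>F t in sequentially.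
                      bec_x m ve ce eps t i \<le> K * exp (- \<beta> * 2 powr (\<alpha> * real t)))))"
proof (intro ballI conjI allI impI)
  fix i assume "i \<in> set js"
  then have lower: "eps ^ (t + 1) \<le> bec_x m ve ce eps t i" for t
    using bec_x_on_G2_cycle_ge assms(2-4) by blast
  then show "eps ^ (t + 1) \<le> bec_x m ve ce eps t i" for t .
  assume "eps > 0"
  then show "\<not> (\<exists>\<alpha> \<beta> K. \<alpha> > 0 \<and> \<beta> > 0 \<and> K > 0 \<and>
                   (\<forall>\<^sub>F t in sequentially.
                      bec_x m ve ce eps t i \<le> K * exp (- \<beta> * 2 powr (\<alpha> * real t))))"
    using geometric_lower_bound_not_double_exponential[OF _ lower] by blast
qed

end
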